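(* There is at most one prime $p$ such that the set of boards $\{G_{p,n}: n\ge 1\}$ contains infinitely many boards of outcome class $V$.
   Context: Domineering is a two-player game played on a rectangular grid of unit squares. The players alternate placing dominoes, each covering two adjacent unoccupied squares; the player Vertical must place dominoes vertically (covering two squares in the same column), and the player Horizontal must place them horizontally (covering two squares in the same row). A player with no legal move on her turn loses. $G_{m,n}$ denotes the empty board with vertical dimension $m$ (number of rows) and horizontal dimension $n$ (number of columns). Every position has one of four outcome classes under optimal play: $V$ (Vertical wins whoever moves first), $H$ (Horizontal wins whoever moves first), $1$ (the player who moves first wins), $2$ (the player who moves second wins). *)

theory Defs
  imports "HOL-Computational_Algebra.Primes"
begin

text \<open>Domineering. A cell is (row, column). A position is the finite set of
  unoccupied cells.\<close>

datatype player = Vertical | Horizontal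

fun opp :: "player \<Rightarrow> player" where
  "opp Vertical = Horizontal"
| "opp Horizontal = Vertical"

fun dominoes :: "player \<Rightarrow> (nat \<times> nat) set \<Rightarrow> (nat \<times> nat) set set" where
  "dominoes Vertical S = {{(i,j),(i+1,j)} | i j. (i,j) \<in> S \<and> (i+1,j) \<in> S}"
| "dominoes Horizontal S = {{(i,j),(i,j+1)} | i j. (i,j) \<in> S \<and> (i,j+1) \<in> S}"

lemma dominoes_sub: "d \<in> dominoes P S \<Longrightarrow> d \<subseteq> S \<and> d \<noteq> {}"
  by (cases P) auto

function first_wins :: "player \<Rightarrow> (nat \<times> nat) set \<Rightarrow> bool" where
  "first_wins P S =
     (if finite S then (\<exists>d\<in>dominoes P S. \<not> first_wins (opp P) (S - d)) else False)"
  by auto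
termination
proof (relation "measure (\<lambda>(P, S). card S)")
  show "wf (measure (\<lambda>(P, S). card S))" by simp
next
  fix P :: player and S :: "(nat \<times> nat) set" and d
  assume "finite S" "d \<in> dominoes P S"
  then have "d \<subseteq> S" "d \<noteq> {}" using dominoes_sub by auto
  then have "S - d \<subset> S" by blast
  then have "card (S - d) < card S"
    using \<open>finite S\<close> by (rule psubset_card_mono[rotated])
  then show "((opp P, S - d), P, S) \<in> measure (\<lambda>(P, S). card S)" by simp
qed

datatype outcome = OV | OH | O1 | O2

definition outcome_class :: "(nat \<times> nat) set \<Rightarrow> outcome" where
  "outcome_class S =
     (if first_wins Vertical S \<and> \<not> first_wins Horizontal S then OV
      else if \<not> first_wins Vertical S \<and> first_wins Horizontal S then OH
      else if first_wins Vertical S \<and> first_wins Horizontal S then O1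
      else O2)"

text \<open>The empty board G_{m,n}: m rows, n columns.\<close>
definition board :: "nat \<Rightarrow> nat \<Rightarrow> (nat \<times> nat) set" where
  "board m n = {(i, j). i < m \<and> j < n}"

end

theory Submission
  imports Defs "HOL-Library.Infinite_Set" "HOL-Number_Theory.Cong"
begin

text \<open>
  If G_{m,n} is of class V, so is G_{m,n-2m}. Vertical moving first loses on G_{m,2m}, whose
  right half is the transposed left half, so that Horizontal can mirror every move. Cutting
  G_{m,n} into G_{m,n-2m} and G_{m,2m} and forbidding the Horizontal dominoes across the cut,
  which only hurts Horizontal, turns the board into a sum of two independent games, and a
  summand on which Vertical loses moving first cannot be what makes the sum a V position.
  Hence infinitely many V boards G_{p,n} yield a whole residue class of widths n mod 2p.
  Boards of class V of equal width can be stacked, while transposition exchanges the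
  players, so G_{m,n} and G_{n,m} are never both of class V. For distinct primes p, q with
  classes r mod 2p and s mod 2q, solving q j = r (mod 2p) and p k = s (mod 2q) gives such a
  pair G_{kp,jq}, G_{jq,kp}. In the remaining case p = 2, s odd, an odd c lies in both
  classes, and stacking G_{2k,c} on G_{q,c} gives a square board G_{c,c} of class V.
\<close>

section \<open>Games with an arbitrary family of moves\<close>

lemma opp_opp [simp]: "opp (opp P) = P"
  by (cases P) auto

lemma card_Diff_nonempty_less: "finite S \<Longrightarrow> d \<subseteq> S \<Longrightarrow> d \<noteq> {} \<Longrightarrow> card (S - d) < card S"
  by (metis Diff_disjoint Diff_subset Int_absorb2 psubsetI psubset_card_mono)

text \<open>This generalises first_wins: restricting the family D lets a board fall apart into
  independent components.\<close>

function wins :: "(player \<Rightarrow> 'a set set) \<Rightarrow> player \<Rightarrow> 'a set \<Rightarrow> bool" where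
  "wins D P S =
     (if finite S then (\<exists>d\<in>{d \<in> D P. d \<subseteq> S \<and> d \<noteq> {}}. \<not> wins D (opp P) (S - d)) else False)"
  by auto
termination
  by (relation "measure (\<lambda>(D, P, S). card S)") (simp_all add: card_Diff_nonempty_less)

declare wins.simps [simp del]

lemma wins_iff:
  "finite S \<Longrightarrow> wins D P S \<longleftrightarrow> (\<exists>d\<in>D P. d \<subseteq> S \<and> d \<noteq> {} \<and> \<not> wins D (opp P) (S - d))"
  by (subst wins.simps) (simp add: Bex_def conj_assoc)

lemma not_wins_infinite: "infinite S \<Longrightarrow> \<not> wins D P S"
  by (subst wins.simps) simp

lemma winsI:
  "finite S \<Longrightarrow> d \<in> D P \<Longrightarrow> d \<subseteq> S \<Longrightarrow> d \<noteq> {} \<Longrightarrow> \<not> wins D (opp P) (S - d) \<Longrightarrow> wins D P S"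
  using wins_iff by blast

lemma winsE:
  assumes "wins D P S"
  obtains d where "finite S" "d \<in> D P" "d \<subseteq> S" "d \<noteq> {}" "\<not> wins D (opp P) (S - d)"
proof -
  have "finite S"
    using assms not_wins_infinite by blast
  with assms that show thesis
    unfolding wins_iff[OF \<open>finite S\<close>] by blast
qed

lemma not_winsD:
  "\<not> wins D P S \<Longrightarrow> finite S \<Longrightarrow> d \<in> D P \<Longrightarrow> d \<subseteq> S \<Longrightarrow> d \<noteq> {} \<Longrightarrow> wins D (opp P) (S - d)"
  using winsI by blast

lemma not_wins_empty [simp]: "\<not> wins D P {}"
  by (auto elim: winsE)

lemma wins_cong:
  assumes "\<And>P d. d \<subseteq> S \<Longrightarrow> d \<in> D P \<longleftrightarrow> d \<in> D' P"
  shows "wins D P S = wins D' P S"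
  using assms
proof (induction "card S" arbitrary: S P rule: less_induct)
  case less
  show ?case
  proof (cases "finite S")
    case True
    have IH: "wins D (opp P) (S - d) = wins D' (opp P) (S - d)" if "d \<subseteq> S" "d \<noteq> {}" for d
      using less.prems that True by (intro less.hyps card_Diff_nonempty_less) auto
    show ?thesis
    proof
      assume "wins D P S"
      then obtain d where "d \<in> D P" "d \<subseteq> S" "d \<noteq> {}" "\<not> wins D (opp P) (S - d)"
        by (rule winsE)
      then show "wins D' P S"
        using IH less.prems True by (intro winsI[of _ d]) auto
    next
      assume "wins D' P S"
      then obtain d where "d \<in> D' P" "d \<subseteq> S" "d \<noteq> {}" "\<not> wins D' (opp P) (S - d)"
        by (rule winsE)
      then show "wins D P S"
        using IH less.prems True by (intro winsI[of _ d]) auto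
    qed
  qed (simp add: not_wins_infinite)
qed

lemma wins_mono:
  assumes "D X \<subseteq> D' X" "D' (opp X) \<subseteq> D (opp X)"
  shows "(wins D X S \<longrightarrow> wins D' X S) \<and> (\<not> wins D (opp X) S \<longrightarrow> \<not> wins D' (opp X) S)"
proof (induction "card S" arbitrary: S rule: less_induct)
  case less
  show ?case
  proof (cases "finite S")
    case True
    have IH: "(wins D X (S - d) \<longrightarrow> wins D' X (S - d)) \<and>
        (\<not> wins D (opp X) (S - d) \<longrightarrow> \<not> wins D' (opp X) (S - d))" if "d \<subseteq> S" "d \<noteq> {}" for d
      using that True by (intro less.hyps card_Diff_nonempty_less)
    show ?thesis
    proof (intro conjI impI)
      assume "wins D X S"
      then obtain d where "d \<in> D X" "d \<subseteq> S" "d \<noteq> {}" "\<not> wins D (opp X) (S - d)"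
        by (rule winsE)
      then show "wins D' X S"
        using IH assms True by (intro winsI[of _ d]) auto
    next
      assume lose: "\<not> wins D (opp X) S"
      show "\<not> wins D' (opp X) S"
      proof
        assume "wins D' (opp X) S"
        then obtain d where d: "d \<in> D' (opp X)" "d \<subseteq> S" "d \<noteq> {}" "\<not> wins D' X (S - d)"
          by (rule winsE) auto
        have "wins D X (S - d)"
          using not_winsD[OF lose True] d assms by fastforce
        then show False
          using IH[OF d(2,3)] d(4) by blast
      qed
    qed
  qed (simp add: not_wins_infinite)
qed

lemma wins_image:
  assumes "inj f" "\<And>P. g (opp P) = opp (g P)" "\<And>P d. f ` d \<in> D' (g P) \<longleftrightarrow> d \<in> D P"
  shows "wins D' (g P) (f ` S) = wins D P S"
proof (induction "card S" arbitrary: S P rule: less_induct)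
  case less
  show ?case
  proof (cases "finite S")
    case False
    then have "infinite (f ` S)"
      using assms(1) by (simp add: finite_image_iff inj_on_subset)
    then show ?thesis
      using False by (simp add: not_wins_infinite)
  next
    case True
    have IH: "wins D' (opp (g P)) (f ` (S - d)) = wins D (opp P) (S - d)" if "d \<subseteq> S" "d \<noteq> {}" for d
      using that True assms(2) less.hyps[OF card_Diff_nonempty_less] by metis
    have image_Diff: "f ` S - f ` d = f ` (S - d)" for d
      using assms(1) by (simp add: image_set_diff)
    show ?thesis
    proof
      assume "wins D' (g P) (f ` S)"
      then obtain e where e: "e \<in> D' (g P)" "e \<subseteq> f ` S" "e \<noteq> {}" "\<not> wins D' (opp (g P)) (f ` S - e)"
        by (rule winsE)
      then obtain d where d: "d \<subseteq> S" "e = f ` d"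
        by (auto simp: subset_image_iff)
      then show "wins D P S"
        using e IH[OF d(1)] assms(3) image_Diff True by (intro winsI[of _ d]) auto
    next
      assume "wins D P S"
      then obtain d where d: "d \<in> D P" "d \<subseteq> S" "d \<noteq> {}" "\<not> wins D (opp P) (S - d)"
        by (rule winsE)
      then show "wins D' (g P) (f ` S)"
        using IH[OF d(2,3)] assms(3) image_Diff True by (intro winsI[of _ "f ` d"]) auto
    qed
  qed
qed

definition separated :: "(player \<Rightarrow> 'a set set) \<Rightarrow> 'a set \<Rightarrow> 'a set \<Rightarrow> bool" where
  "separated D A B \<longleftrightarrow> A \<inter> B = {} \<and> (\<forall>P. \<forall>d\<in>D P. d \<subseteq> A \<union> B \<longrightarrow> d \<subseteq> A \<or> d \<subseteq> B)"

lemma separated_mono: "separated D A B \<Longrightarrow> A' \<subseteq> A \<Longrightarrow> B' \<subseteq> B \<Longrightarrow> separated D A' B'"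
proof -
  assume sep: "separated D A B" and "A' \<subseteq> A" "B' \<subseteq> B"
  have "d \<subseteq> A' \<or> d \<subseteq> B'" if "d \<in> D P" "d \<subseteq> A' \<union> B'" for P d
  proof -
    have "d \<subseteq> A \<or> d \<subseteq> B"
      using sep that \<open>A' \<subseteq> A\<close> \<open>B' \<subseteq> B\<close> unfolding separated_def by blast
    moreover have "A \<inter> B = {}"
      using sep unfolding separated_def by blast
    ultimately show ?thesis
      using that(2) \<open>A' \<subseteq> A\<close> \<open>B' \<subseteq> B\<close> by blast
  qed
  moreover have "A' \<inter> B' = {}"
    using sep \<open>A' \<subseteq> A\<close> \<open>B' \<subseteq> B\<close> unfolding separated_def by blast
  ultimately show ?thesis
    unfolding separated_def by blast
qed

lemma separated_commute: "separated D A B \<Longrightarrow> separated D B A"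
  unfolding separated_def by (simp add: Int_commute Un_commute) blast

lemma separatedD: "separated D A B \<Longrightarrow> d \<in> D P \<Longrightarrow> d \<subseteq> A \<union> B \<Longrightarrow> d \<subseteq> A \<or> d \<subseteq> B"
  unfolding separated_def by blast

lemma not_wins_separated_union:
  assumes "separated D A B" "finite A" "finite B" "\<not> wins D P A" "\<not> wins D P B"
  shows "\<not> wins D P (A \<union> B)"
  using assms
proof (induction "card (A \<union> B)" arbitrary: A B rule: less_induct)
  case less
  have reply: "wins D (opp P) (A' \<union> B' - d)"
    if "separated D A' B'" "finite A'" "finite B'" "\<not> wins D P A'" "\<not> wins D P B'"
      and "A' \<union> B' = A \<union> B" "d \<in> D P" "d \<subseteq> A'" "d \<noteq> {}" for A' B' d
  proof -
    have "wins D (opp P) (A' - d)"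
      using not_winsD that by blast
    then obtain e where e: "e \<in> D (opp P)" "e \<subseteq> A' - d" "e \<noteq> {}" "\<not> wins D P (A' - d - e)"
      by (rule winsE) auto
    have disjoint: "A' \<inter> B' = {}"
      using that(1) unfolding separated_def by blast
    have "card ((A' - d - e) \<union> B') < card (A \<union> B)"
      using that(6,8,9) disjoint less.prems(2,3) by (intro psubset_card_mono) auto
    moreover have "separated D (A' - d - e) B'"
      using that(1) by (rule separated_mono) auto
    ultimately have "\<not> wins D P ((A' - d - e) \<union> B')"
      using less.hyps e(4) that by simp
    moreover have "(A' - d - e) \<union> B' = A' \<union> B' - d - e"
      using that(8) e(2) disjoint by blast
    ultimately show ?thesis
      using e(1-3) that(2,3) by (intro winsI[of _ e]) auto
  qed
  show ?case
  proof
    assume "wins D P (A \<union> B)"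
    then obtain d where d: "d \<in> D P" "d \<subseteq> A \<union> B" "d \<noteq> {}" "\<not> wins D (opp P) (A \<union> B - d)"
      by (rule winsE)
    from separatedD[OF less.prems(1) d(1,2)] show False
    proof
      assume "d \<subseteq> A"
      then show False
        using reply[of A B d] less.prems d by blast
    next
      assume "d \<subseteq> B"
      then show False
        using reply[OF separated_commute[OF less.prems(1)]] less.prems d by (simp add: Un_commute)
    qed
  qed
qed

corollary wins_separated_union:
  assumes "separated D A B" "finite A" "finite B" "wins D P A" "\<not> wins D (opp P) B"
  shows "wins D P (A \<union> B)"
proof -
  obtain d where d: "d \<in> D P" "d \<subseteq> A" "d \<noteq> {}" "\<not> wins D (opp P) (A - d)"
    using assms(4) by (rule winsE)
  have "separated D (A - d) B"
    using assms(1) by (rule separated_mono) auto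
  then have "\<not> wins D (opp P) ((A - d) \<union> B)"
    using not_wins_separated_union assms(2,3,5) d(4) by blast
  moreover have "(A - d) \<union> B = A \<union> B - d"
    using assms(1) d(2) unfolding separated_def by blast
  ultimately show ?thesis
    using d assms(2,3) by (intro winsI[of _ d]) auto
qed

lemma not_wins_mirror_union:
  assumes "inj f" "separated D A (f ` A)" "finite A"
    and "\<And>P d. d \<subseteq> A \<Longrightarrow> f ` d \<in> D (opp P) \<longleftrightarrow> d \<in> D P"
  shows "\<not> wins D P (A \<union> f ` A)"
  using assms(2-4)
proof (induction "card A" arbitrary: A P rule: less_induct)
  case less
  have disjoint: "A \<inter> f ` A = {}"
    using less.prems unfolding separated_def by blast
  have IH: "\<not> wins D P' ((A - d) \<union> f ` (A - d))" if "d \<subseteq> A" "d \<noteq> {}" for d P'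
  proof (rule less.hyps)
    show "card (A - d) < card A"
      using that less.prems(2) by (simp add: card_Diff_nonempty_less)
    show "separated D (A - d) (f ` (A - d))"
      using less.prems(1) by (rule separated_mono) auto
  qed (use less.prems in auto)
  have image_Diff: "f ` A - f ` d = f ` (A - d)" for d
    using assms(1) by (simp add: image_set_diff)
  have mirror_reply: "wins D (opp P) (A \<union> f ` A - d)"
    if "e \<subseteq> A" "e \<noteq> {}" "d' \<in> D (opp P)" "(d = e \<and> d' = f ` e) \<or> (d = f ` e \<and> d' = e)" for d d' e
  proof (rule winsI[of _ d'])
    show "d' \<subseteq> A \<union> f ` A - d" "d' \<noteq> {}"
      using that disjoint by auto
    have "A \<union> f ` A - d - d' = (A - e) \<union> f ` (A - e)"
      using that(1,4) disjoint image_Diff by blast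
    then show "\<not> wins D (opp (opp P)) (A \<union> f ` A - d - d')"
      using IH[OF that(1,2)] by simp
  qed (use that less.prems(2) in auto)
  show ?case
  proof
    assume "wins D P (A \<union> f ` A)"
    then obtain d where d: "d \<in> D P" "d \<subseteq> A \<union> f ` A" "d \<noteq> {}" "\<not> wins D (opp P) (A \<union> f ` A - d)"
      by (rule winsE)
    from separatedD[OF less.prems(1) d(1,2)] show False
    proof
      assume "d \<subseteq> A"
      then have "f ` d \<in> D (opp P)"
        using less.prems(3) d(1) by blast
      then show False
        using mirror_reply[OF \<open>d \<subseteq> A\<close> d(3)] d(4) by blast
    next
      assume "d \<subseteq> f ` A"
      then obtain e where e: "e \<subseteq> A" "d = f ` e"
        by (auto simp: subset_image_iff)
      then have "e \<in> D (opp P)"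
        using less.prems(3)[OF e(1), of "opp P"] d(1) by simp
      then show False
        using mirror_reply[OF e(1)] e(2) d(3,4) by blast
    qed
  qed
qed

definition split_moves :: "(player \<Rightarrow> 'a set set) \<Rightarrow> 'a set \<Rightarrow> player \<Rightarrow> 'a set set" where
  "split_moves D C P = {d \<in> D P. d \<subseteq> C \<or> d \<subseteq> - C}"

lemma split_moves_subset: "split_moves D C P \<subseteq> D P"
  by (auto simp: split_moves_def)

lemma separated_split_moves: "A \<subseteq> C \<Longrightarrow> B \<subseteq> - C \<Longrightarrow> separated (split_moves D C) A B"
  unfolding separated_def split_moves_def by blast

lemma wins_split_moves: "S \<subseteq> C \<or> S \<subseteq> - C \<Longrightarrow> wins (split_moves D C) P S = wins D P S"
  by (rule wins_cong) (auto simp: split_moves_def)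

section \<open>Domineering boards\<close>

fun adjacent :: "player \<Rightarrow> nat \<times> nat \<Rightarrow> nat \<times> nat \<Rightarrow> bool" where
  "adjacent Vertical (i, j) (i', j') \<longleftrightarrow> i' = Suc i \<and> j' = j"
| "adjacent Horizontal (i, j) (i', j') \<longleftrightarrow> i' = i \<and> j' = Suc j"

definition domino :: "player \<Rightarrow> (nat \<times> nat) set set" where
  "domino P = {{u, v} | u v. adjacent P u v}"

lemma mem_domino_iff: "d \<in> domino P \<longleftrightarrow> (\<exists>u v. d = {u, v} \<and> adjacent P u v)"
  by (simp add: domino_def)

lemma dominoes_eq: "dominoes P S = {d \<in> domino P. d \<subseteq> S}"
  by (cases P) (auto simp: domino_def)

declare first_wins.simps [simp del]

lemma first_wins_eq_wins: "first_wins P S = wins domino P S"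
proof (induction P S rule: first_wins.induct)
  case (1 P S)
  show ?case
  proof (cases "finite S")
    case True
    have "d \<noteq> {}" if "d \<in> domino P" for d
      using that by (auto simp: domino_def)
    then show ?thesis
      using 1 True by (subst first_wins.simps) (auto simp: wins_iff dominoes_eq)
  qed (subst first_wins.simps, simp add: not_wins_infinite)
qed

lemma image_mem_domino_iff:
  assumes "inj f" "\<And>u v. adjacent Q (f u) (f v) \<longleftrightarrow> adjacent P u v"
  shows "f ` d \<in> domino Q \<longleftrightarrow> d \<in> domino P"
proof
  assume "f ` d \<in> domino Q"
  then obtain a b where ab: "f ` d = {a, b}" "adjacent Q a b"
    unfolding mem_domino_iff by blast
  then obtain u v where uv: "u \<in> d" "v \<in> d" "f u = a" "f v = b"
    by (metis imageE insertI1 insert_commute)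
  have "d = {u, v}"
  proof
    show "d \<subseteq> {u, v}"
    proof
      fix x
      assume "x \<in> d"
      then have "f x = f u \<or> f x = f v"
        using ab(1) uv(3,4) by blast
      then show "x \<in> {u, v}"
        using assms(1) by (auto simp: inj_eq)
    qed
  qed (use uv in blast)
  moreover have "adjacent P u v"
    using ab(2) uv(3,4) assms(2) by metis
  ultimately show "d \<in> domino P"
    unfolding mem_domino_iff by blast
next
  assume "d \<in> domino P"
  then obtain u v where "d = {u, v}" "adjacent P u v"
    unfolding mem_domino_iff by blast
  then have "f ` d = {f u, f v}" "adjacent Q (f u) (f v)"
    using assms(2) by simp_all
  then show "f ` d \<in> domino Q"
    unfolding mem_domino_iff by blast
qed

definition shift_cell :: "nat \<Rightarrow> nat \<Rightarrow> nat \<times> nat \<Rightarrow> nat \<times> nat" where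
  "shift_cell a b = (\<lambda>(i, j). (i + a, j + b))"

definition transpose_cell :: "nat \<times> nat \<Rightarrow> nat \<times> nat" where
  "transpose_cell = (\<lambda>(i, j). (j, i))"

lemma inj_shift_cell: "inj (shift_cell a b)"
  by (auto simp: inj_def shift_cell_def)

lemma inj_transpose_cell: "inj transpose_cell"
  by (auto simp: inj_def transpose_cell_def)

lemma adjacent_shift_cell: "adjacent P (shift_cell a b u) (shift_cell a b v) \<longleftrightarrow> adjacent P u v"
  by (cases P; cases u; cases v) (auto simp: shift_cell_def)

lemma adjacent_transpose_cell: "adjacent (opp P) (transpose_cell u) (transpose_cell v) \<longleftrightarrow> adjacent P u v"
  by (cases P; cases u; cases v) (auto simp: transpose_cell_def)

lemma wins_domino_shift: "wins domino P (shift_cell a b ` S) = wins domino P S"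
  by (rule wins_image[where g = "\<lambda>P. P"])
    (simp_all add: inj_shift_cell image_mem_domino_iff adjacent_shift_cell)

lemma wins_domino_transpose: "wins domino (opp P) (transpose_cell ` S) = wins domino P S"
  by (rule wins_image[where g = opp])
    (simp_all add: inj_transpose_cell image_mem_domino_iff adjacent_transpose_cell)

lemma finite_board [simp]: "finite (board m n)"
  by (rule finite_subset[of _ "{..<m} \<times> {..<n}"]) (auto simp: board_def)

lemma board_add_rows: "board (m1 + m2) n = board m1 n \<union> shift_cell m1 0 ` board m2 n"
  by (auto simp: board_def shift_cell_def image_iff; presburger)

lemma board_add_cols: "board m (n1 + n2) = board m n1 \<union> shift_cell 0 n1 ` board m n2"
  by (auto simp: board_def shift_cell_def image_iff; presburger)

lemma board_transpose: "board n m = transpose_cell ` board m n"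
  by (auto simp: board_def transpose_cell_def image_iff)

definition is_V :: "(nat \<times> nat) set \<Rightarrow> bool" where
  "is_V S \<longleftrightarrow> wins domino Vertical S \<and> \<not> wins domino Horizontal S"

lemma outcome_class_eq_OV_iff: "outcome_class S = OV \<longleftrightarrow> is_V S"
  by (simp add: outcome_class_def is_V_def first_wins_eq_wins)

lemma is_V_board_add_rows:
  assumes "is_V (board m1 n)" "is_V (board m2 n)"
  shows "is_V (board (m1 + m2) n)"
proof -
  define C where "C = {x :: nat \<times> nat. fst x < m1}"
  let ?A = "board m1 n" and ?B = "shift_cell m1 0 ` board m2 n" and ?D = "split_moves domino C"
  have A: "?A \<subseteq> C" and B: "?B \<subseteq> - C"
    by (auto simp: C_def board_def shift_cell_def)
  have sep: "separated ?D ?A ?B"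
    using A B by (rule separated_split_moves)
  have A_V: "wins ?D Vertical ?A" and A_H: "\<not> wins ?D Horizontal ?A"
    using assms(1) A by (simp_all add: wins_split_moves is_V_def)
  have B_H: "\<not> wins ?D Horizontal ?B"
    using assms(2) B by (simp add: wins_split_moves wins_domino_shift is_V_def)
  have "wins ?D Vertical (?A \<union> ?B)"
    using wins_separated_union[OF sep finite_board _ A_V] B_H by simp
  moreover have "\<not> wins ?D Horizontal (?A \<union> ?B)"
    using not_wins_separated_union[OF sep finite_board _ A_H B_H] by simp
  moreover have "domino (opp Vertical) \<subseteq> ?D (opp Vertical)"
    by (auto simp: split_moves_def C_def mem_domino_iff)
  \<comment> \<open>allowing the Vertical dominoes across the seam can only help Vertical\<close>
  ultimately show ?thesis
    using wins_mono[where D = ?D and D' = domino and X = Vertical and S = "?A \<union> ?B"]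
      split_moves_subset[of domino C Vertical]
    by (simp add: is_V_def board_add_rows)
qed

lemma is_V_board_mult_rows: "is_V (board m n) \<Longrightarrow> 0 < k \<Longrightarrow> is_V (board (k * m) n)"
proof (induction k)
  case (Suc k)
  then show ?case
    by (cases "k = 0") (auto intro: is_V_board_add_rows)
qed simp

lemma is_V_board_transpose: "is_V (board m n) \<Longrightarrow> \<not> is_V (board n m)"
  using wins_domino_transpose[of Vertical "board m n"] wins_domino_transpose[of Horizontal "board m n"]
  by (simp add: is_V_def board_transpose[symmetric])

lemma is_V_board_remove_cols:
  assumes "is_V (board m (a + b))" "\<not> wins domino Vertical (board m b)"
  shows "is_V (board m a)"
proof -
  define C where "C = {x :: nat \<times> nat. snd x < a}"
  let ?A = "board m a" and ?B = "shift_cell 0 a ` board m b" and ?D = "split_moves domino C"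
  have A: "?A \<subseteq> C" and B: "?B \<subseteq> - C"
    by (auto simp: C_def board_def shift_cell_def)
  have sep: "separated ?D ?A ?B"
    using A B by (rule separated_split_moves)
  have "domino Vertical \<subseteq> ?D Vertical"
    by (auto simp: split_moves_def C_def mem_domino_iff)
  \<comment> \<open>forbidding the Horizontal dominoes across the seam can only hurt Horizontal\<close>
  from wins_mono[where D = domino and D' = ?D and X = Vertical and S = "?A \<union> ?B", OF this]
  have mono: "(wins domino Vertical (?A \<union> ?B) \<longrightarrow> wins ?D Vertical (?A \<union> ?B)) \<and>
      (\<not> wins domino Horizontal (?A \<union> ?B) \<longrightarrow> \<not> wins ?D Horizontal (?A \<union> ?B))"
    using split_moves_subset[of domino C Horizontal] by simp
  have AB_V: "wins ?D Vertical (?A \<union> ?B)" and AB_H: "\<not> wins ?D Horizontal (?A \<union> ?B)"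
    using assms(1) mono by (simp_all add: is_V_def board_add_cols)
  have B_V: "\<not> wins ?D Vertical ?B"
    using assms(2) B by (simp add: wins_split_moves wins_domino_shift)
  have fin_B: "finite ?B"
    by simp
  have "wins ?D Vertical ?A"
    using not_wins_separated_union[OF sep finite_board fin_B _ B_V] AB_V by blast
  moreover have "\<not> wins ?D Horizontal ?A"
    using wins_separated_union[OF sep finite_board fin_B, of Horizontal] B_V AB_H by auto
  ultimately show ?thesis
    using A by (simp add: wins_split_moves is_V_def)
qed

lemma not_wins_Vertical_board_double_width: "\<not> wins domino Vertical (board m (2 * m))"
proof -
  define C where "C = {x :: nat \<times> nat. snd x < m}"
  \<comment> \<open>f maps the left half onto the right half, exchanging the roles of the players\<close>
  define f where "f = shift_cell 0 m \<circ> transpose_cell"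
  let ?A = "board m m" and ?D = "split_moves domino C"
  have A: "?A \<subseteq> C" and fC: "f ` S \<subseteq> - C" for S
    by (auto simp: C_def board_def f_def shift_cell_def transpose_cell_def)
  have "f ` ?A = shift_cell 0 m ` ?A"
    unfolding f_def image_comp[symmetric] board_transpose[symmetric] ..
  then have board: "board m (2 * m) = ?A \<union> f ` ?A"
    by (simp add: mult_2 board_add_cols)
  have inj_f: "inj f"
    by (simp add: f_def inj_compose inj_shift_cell inj_transpose_cell)
  have adj: "adjacent (opp P) (f u) (f v) \<longleftrightarrow> adjacent P u v" for P u v
    by (simp add: f_def adjacent_shift_cell adjacent_transpose_cell)
  have "f ` d \<in> ?D (opp P) \<longleftrightarrow> d \<in> ?D P" if "d \<subseteq> ?A" for P d
  proof -
    have "d \<subseteq> C"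
      using that A by blast
    then show ?thesis
      using image_mem_domino_iff[OF inj_f adj, where d = d] fC[of d] by (auto simp: split_moves_def)
  qed
  then have "\<not> wins ?D Vertical (?A \<union> f ` ?A)"
    by (intro not_wins_mirror_union[OF inj_f separated_split_moves[OF A fC] finite_board])
  moreover have "domino Vertical \<subseteq> ?D Vertical"
    by (auto simp: split_moves_def C_def mem_domino_iff)
  ultimately show ?thesis
    using wins_mono[where D = ?D and D' = domino and X = Horizontal and S = "?A \<union> f ` ?A"]
      split_moves_subset[of domino C Horizontal] board
    by simp
qed

lemma is_V_board_drop_period: "is_V (board m (n + 2 * m * t)) \<Longrightarrow> is_V (board m n)"
proof (induction t)
  case (Suc t)
  have "n + 2 * m * Suc t = (n + 2 * m * t) + 2 * m"
    by simp
  then show ?case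
    using Suc is_V_board_remove_cols not_wins_Vertical_board_double_width by metis
qed simp

lemma is_V_board_cong:
  assumes "is_V (board m n)" "c \<le> n" "[c = n] (mod 2 * m)"
  shows "is_V (board m c)"
proof -
  obtain t where "n = t * (2 * m) + c"
    using assms(2,3) cong_le_nat[of c n] cong_sym by blast
  then show ?thesis
    using assms(1) is_V_board_drop_period[of m c t] by (simp add: ac_simps)
qed

lemma not_is_V_board_2_2: "\<not> is_V (board 2 2)"
proof -
  have board: "board 2 2 = {(0, 0), (0, 1), (1, 0), (1, 1)}"
    by (auto simp: board_def less_2_cases_iff)
  have "\<not> wins domino Vertical {(1, 0), (1, 1)}"
  proof
    assume "wins domino Vertical {(1, 0), (1, 1)}"
    then obtain d where "d \<in> domino Vertical" "d \<subseteq> {(1, 0), (1, 1)}"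
      by (rule winsE)
    then show False
      by (auto simp: mem_domino_iff)
  qed
  moreover have "{(0, 0), (0, 1)} \<in> domino Horizontal"
    by (auto simp: mem_domino_iff)
  moreover have "board 2 2 - {(0, 0), (0, 1)} = {(1, 0), (1, 1)}"
    by (auto simp: board)
  ultimately have "wins domino Horizontal (board 2 2)"
    by (intro winsI[of _ "{(0, 0), (0, 1)}"]) (auto simp: board)
  then show ?thesis
    by (simp add: is_V_def)
qed

section \<open>Residue classes of boards of class V\<close>

lemma infinite_is_V_board_imp_residue_class:
  assumes "infinite {n. is_V (board m n)}"
  obtains r where "\<And>c. [c = r] (mod 2 * m) \<Longrightarrow> is_V (board m c)"
proof -
  let ?N = "{n. is_V (board m n)}"
  have "m \<noteq> 0"
  proof
    assume "m = 0"
    then have "?N = {}"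
      by (simp add: board_def is_V_def)
    with assms show False
      by simp
  qed
  have "finite ((\<lambda>n. n mod (2 * m)) ` ?N)"
    by (rule finite_subset[of _ "{..<2 * m}"]) (use \<open>m \<noteq> 0\<close> in auto)
  then obtain r where "r \<in> ?N" and inf: "infinite {n \<in> ?N. n mod (2 * m) = r mod (2 * m)}"
    using pigeonhole_infinite[OF assms] by blast
  have "is_V (board m c)" if "[c = r] (mod 2 * m)" for c
  proof -
    obtain n where n: "n \<in> ?N" "n mod (2 * m) = r mod (2 * m)" "c \<le> n"
      using inf unfolding infinite_nat_iff_unbounded_le by blast
    then have "[c = n] (mod 2 * m)"
      using that by (simp add: cong_def)
    with n show ?thesis
      using is_V_board_cong[of m n c] by simp
  qed
  then show thesis
    by (rule that)
qed

lemma cong_solve_dvd_pos_nat: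
  fixes a n b :: nat
  assumes "gcd a n dvd b" "0 < n"
  shows "\<exists>x>0. [a * x = b] (mod n)"
proof -
  obtain x where x: "[a * x = b] (mod n)"
    using cong_solve_dvd_nat[OF assms(1)] by blast
  have "[a * (x + n) = a * x] (mod n)"
    unfolding cong_def by (simp add: distrib_left)
  with x assms(2) show ?thesis
    by (intro exI[of _ "x + n"]) (auto intro: cong_trans)
qed

lemma no_V_residue_classes_coprime:
  assumes V_p: "\<And>c. [c = r] (mod 2 * p) \<Longrightarrow> is_V (board p c)"
    and V_q: "\<And>c. [c = s] (mod 2 * q) \<Longrightarrow> is_V (board q c)"
    and "gcd q (2 * p) dvd r" "gcd p (2 * q) dvd s" "0 < p" "0 < q"
  shows False
proof -
  obtain j where j: "0 < j" "[q * j = r] (mod 2 * p)"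
    using cong_solve_dvd_pos_nat[OF assms(3)] assms(5) by auto
  obtain k where k: "0 < k" "[p * k = s] (mod 2 * q)"
    using cong_solve_dvd_pos_nat[OF assms(4)] assms(6) by auto
  have "is_V (board (k * p) (q * j))"
    using V_p[OF j(2)] k(1) by (rule is_V_board_mult_rows)
  moreover have "is_V (board (j * q) (p * k))"
    using V_q[OF k(2)] j(1) by (rule is_V_board_mult_rows)
  ultimately show False
    using is_V_board_transpose by (simp add: mult.commute)
qed

lemma no_V_residue_classes_2_odd:
  assumes V_2: "\<And>c. [c = r] (mod 4) \<Longrightarrow> is_V (board 2 c)"
    and V_q: "\<And>c. [c = s] (mod 2 * q) \<Longrightarrow> is_V (board q c)"
    and "odd q" "odd s"
  shows False
proof -
  have "odd r"
  proof
    assume "even r"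
    then have "[0 = r] (mod 4) \<or> [2 = r] (mod 4)"
      unfolding cong_def by presburger
    moreover have "\<not> is_V (board 2 0)"
      by (simp add: board_def is_V_def)
    ultimately show False
      using V_2 not_is_V_board_2_2 by blast
  qed
  obtain u where q: "q = 2 * u + 1"
    using \<open>odd q\<close> by (rule oddE)
  have "[s + 2 * q * 2 = r] (mod 4) \<or> [s + 2 * q * 3 = r] (mod 4)"
    unfolding cong_def q using \<open>odd r\<close> \<open>odd s\<close> by presburger
  then obtain x where x: "x \<in> {2, 3}" "[s + 2 * q * x = r] (mod 4)"
    by blast
  define c where "c = s + 2 * q * x"
  have "[c = s] (mod 2 * q)"
    unfolding c_def cong_def by simp
  have "q < c"
    using x(1) q unfolding c_def by auto
  moreover have "odd c"
    using x(2) \<open>odd r\<close> unfolding c_def cong_def by presburger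
  ultimately have "\<exists>k. c = k * 2 + q \<and> 0 < k"
    using \<open>odd q\<close> by presburger
  then obtain k where k: "c = k * 2 + q" "0 < k"
    by blast
  have c_r: "[c = r] (mod 4)"
    using x(2) unfolding c_def .
  have "is_V (board (k * 2 + q) c)"
    using is_V_board_mult_rows[OF V_2[OF c_r] k(2)] V_q[OF \<open>[c = s] (mod 2 * q)\<close>] by (rule is_V_board_add_rows)
  then show False
    using is_V_board_transpose k(1) by blast
qed

lemma odd_prime_nat_iff: "prime p \<Longrightarrow> odd p \<longleftrightarrow> p \<noteq> (2::nat)"
  using prime_odd_nat[of p] prime_ge_2_nat[of p] by fastforce

lemma no_V_residue_classes_primes:
  assumes "prime p" "prime q" "p \<noteq> q" "odd q"
    and V_p: "\<And>c. [c = r] (mod 2 * p) \<Longrightarrow> is_V (board p c)"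
    and V_q: "\<And>c. [c = s] (mod 2 * q) \<Longrightarrow> is_V (board q c)"
  shows False
proof -
  have pos: "0 < p" "0 < q"
    using assms(1,2) by (simp_all add: prime_gt_0_nat)
  have "coprime q (2 * p)"
    using assms(1-4) primes_coprime[of q p] by simp
  then have gcd_q: "gcd q (2 * p) dvd r"
    by simp
  consider "odd p" | "p = 2" "even s" | "p = 2" "odd s"
    using odd_prime_nat_iff[OF assms(1)] by blast
  then show False
  proof cases
    case 1
    then have "coprime p (2 * q)"
      using assms(1-3) primes_coprime[of p q] by simp
    then show False
      using no_V_residue_classes_coprime[OF V_p V_q gcd_q _ pos] by simp
  next
    case 2
    then show False
      using no_V_residue_classes_coprime[OF V_p V_q gcd_q _ pos] by auto
  next
    case 3
    then show False
      using no_V_residue_classes_2_odd[of r s q] V_p V_q \<open>odd q\<close> by simp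
  qed
qed

theorem corollary3p7:
  shows "\<forall>p q :: nat. prime p \<and> prime q
           \<and> infinite {n. n \<ge> 1 \<and> outcome_class (board p n) = OV}
           \<and> infinite {n. n \<ge> 1 \<and> outcome_class (board q n) = OV}
           \<longrightarrow> p = q"
proof (intro allI impI)
  fix p q :: nat
  assume asm: "prime p \<and> prime q
           \<and> infinite {n. n \<ge> 1 \<and> outcome_class (board p n) = OV}
           \<and> infinite {n. n \<ge> 1 \<and> outcome_class (board q n) = OV}"
  have "infinite {n. is_V (board m n)}" if "infinite {n. n \<ge> 1 \<and> outcome_class (board m n) = OV}" for m
    using that by (rule infinite_super[rotated]) (auto simp: outcome_class_eq_OV_iff)
  then obtain r s where
    V_p: "\<And>c. [c = r] (mod 2 * p) \<Longrightarrow> is_V (board p c)" and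
    V_q: "\<And>c. [c = s] (mod 2 * q) \<Longrightarrow> is_V (board q c)"
    using asm infinite_is_V_board_imp_residue_class by metis
  show "p = q"
  proof (rule ccontr)
    assume "p \<noteq> q"
    then have "odd p \<or> odd q"
      using asm odd_prime_nat_iff by auto
    then show False
      using no_V_residue_classes_primes[OF _ _ _ _ V_p V_q] no_V_residue_classes_primes[OF _ _ _ _ V_q V_p]
        asm \<open>p \<noteq> q\<close> by metis
  qed
qed

end
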